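(* Let $\psi$ be a smooth even function on $\mathbb{R}$ with $\psi(\lambda)=1$ for $-1\le\lambda\le1$ and $\operatorname{supp}\psi\subset[-2,2]$. Then there is a constant $C$ depending only on $\psi$ such that for all $t\ge1$ and all real $a$, \[ \sup_{L\ge1}\Bigl|\int_0^\infty e^{it\lambda}\sin(a\sqrt\lambda)\,\psi\Bigl(\frac{\sqrt\lambda}{L}\Bigr)\,d\lambda\Bigr|\le C\,t^{-3/2}|a| . \] *)

theory Defs
  imports "HOL-Analysis.Analysis"
begin

definition smooth_real :: "(real \<Rightarrow> real) \<Rightarrow> bool" where
  "smooth_real f \<longleftrightarrow>
     (\<exists>D :: nat \<Rightarrow> real \<Rightarrow> real. D 0 = f \<and>
        (\<forall>n x. (D n has_real_derivative D (Suc n) x) (at x)))"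

end

theory Submission
  imports Defs
begin

(* After the substitution s = r^2 the integral becomes the integral over [0, 3L] of
   2r e^(itr^2) sin(ar) psi(r/L), and 2r e^(itr^2) is the derivative of e^(itr^2)/(it);
   integrating by parts (no boundary terms, as sin 0 = 0 and psi 3 = 0) gains a factor 1/t.
   Writing cos(ar) through e^(iar) and e^(-iar), what remains are integrals of
   e^(i(tr^2 + cr)) against the weights psi(r/L) and sin(ar) psi'(r/L)/L, which vanish at
   r = 3L and have derivatives of size O(1/L) and O(|a|/L) on [0, 3L], the latter because
   |sin(ar)| <= |a| r.  Completing the square turns every partial integral of e^(i(tr^2 + cr))
   into a Fresnel integral, so these primitives are bounded by 6/sqrt t uniformly in c; a second
   integration by parts against them bounds each piece by O(|a|/sqrt t).  Altogether the
   integral is O(t^(-3/2) |a|), with a constant depending only on sup |psi'| and sup |psi''|. *)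

lemma integral_by_parts_interval:
  fixes F f w w' :: "real \<Rightarrow> complex"
  assumes ab: "a \<le> b"
    and dF: "\<And>x. x \<in> {a..b} \<Longrightarrow> (F has_vector_derivative f x) (at x within {a..b})"
    and dw: "\<And>x. x \<in> {a..b} \<Longrightarrow> (w has_vector_derivative w' x) (at x within {a..b})"
    and cf: "continuous_on {a..b} f" and cw': "continuous_on {a..b} w'"
  shows "integral {a..b} (\<lambda>x. f x * w x) = F b * w b - F a * w a - integral {a..b} (\<lambda>x. F x * w' x)"
proof -
  have cF: "continuous_on {a..b} F"
    using dF by (rule continuous_on_vector_derivative)
  have cw: "continuous_on {a..b} w"
    using dw by (rule continuous_on_vector_derivative)
  have "((\<lambda>x. F x * w' x + f x * w x) has_integral (F b * w b - F a * w a)) {a..b}"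
    by (rule fundamental_theorem_of_calculus[OF ab]) (rule has_vector_derivative_mult[OF dF dw])
  moreover have i1: "(\<lambda>x. F x * w' x) integrable_on {a..b}"
    by (intro integrable_continuous_interval continuous_intros cF cw')
  moreover have i2: "(\<lambda>x. f x * w x) integrable_on {a..b}"
    by (intro integrable_continuous_interval continuous_intros cf cw)
  ultimately have "integral {a..b} (\<lambda>x. F x * w' x) + integral {a..b} (\<lambda>x. f x * w x)
      = F b * w b - F a * w a"
    using integral_add[OF i1 i2] integral_unique by metis
  then show ?thesis by (simp add: algebra_simps)
qed

lemma norm_integral_mult_le_primitive_bound:
  fixes h w w' :: "real \<Rightarrow> complex"
  assumes ab: "a \<le> b" and ch: "continuous_on {a..b} h"
    and dw: "\<And>x. x \<in> {a..b} \<Longrightarrow> (w has_vector_derivative w' x) (at x within {a..b})"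
    and cw': "continuous_on {a..b} w'"
    and primitive: "\<And>r. r \<in> {a..b} \<Longrightarrow> norm (integral {a..r} h) \<le> B"
  shows "norm (integral {a..b} (\<lambda>x. h x * w x))
           \<le> B * (norm (w b) + integral {a..b} (\<lambda>x. norm (w' x)))"
proof -
  define F where "F r = integral {a..r} h" for r
  have dF: "(F has_vector_derivative h x) (at x within {a..b})" if "x \<in> {a..b}" for x
    unfolding F_def by (rule integral_has_vector_derivative[OF ch that])
  have cF: "continuous_on {a..b} F"
    using dF by (rule continuous_on_vector_derivative)
  have "integral {a..b} (\<lambda>x. h x * w x) = F b * w b - integral {a..b} (\<lambda>x. F x * w' x)"
    using integral_by_parts_interval[OF ab dF dw ch cw'] by (simp add: F_def)
  moreover have "norm (F b * w b) \<le> B * norm (w b)"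
    unfolding norm_mult F_def using primitive[of b] ab by (simp add: mult_right_mono)
  moreover have "norm (integral {a..b} (\<lambda>x. F x * w' x)) \<le> integral {a..b} (\<lambda>x. B * norm (w' x))"
  proof (rule integral_norm_bound_integral)
    show "(\<lambda>x. F x * w' x) integrable_on {a..b}" "(\<lambda>x. B * norm (w' x)) integrable_on {a..b}"
      by (intro integrable_continuous_interval continuous_intros cF cw')+
    show "norm (F x * w' x) \<le> B * norm (w' x)" if "x \<in> {a..b}" for x
      unfolding norm_mult F_def using primitive[OF that] by (simp add: mult_right_mono)
  qed
  ultimately have "norm (integral {a..b} (\<lambda>x. h x * w x))
      \<le> B * norm (w b) + integral {a..b} (\<lambda>x. B * norm (w' x))"
    using norm_triangle_ineq4[of "F b * w b" "integral {a..b} (\<lambda>x. F x * w' x)"] by simp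
  then show ?thesis
    by (simp add: distrib_left)
qed

lemma norm_integral_mult_le_primitive_bound_vanishing:
  fixes h w w' :: "real \<Rightarrow> complex"
  assumes ab: "a \<le> b" and ch: "continuous_on {a..b} h"
    and dw: "\<And>x. x \<in> {a..b} \<Longrightarrow> (w has_vector_derivative w' x) (at x within {a..b})"
    and cw': "continuous_on {a..b} w'"
    and primitive: "\<And>r. r \<in> {a..b} \<Longrightarrow> norm (integral {a..r} h) \<le> B"
    and wb: "w b = 0" and M: "\<And>x. x \<in> {a..b} \<Longrightarrow> norm (w' x) \<le> M"
  shows "norm (integral {a..b} (\<lambda>x. h x * w x)) \<le> B * M * (b - a)"
proof -
  have "B \<ge> 0" using primitive[of a] ab by simp
  moreover have "norm (integral {a..b} (\<lambda>x. norm (w' x))) \<le> M * (b - a)"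
    by (rule integral_bound[OF ab]) (use cw' M in \<open>auto intro: continuous_intros\<close>)
  ultimately have "B * (norm (w b) + integral {a..b} (\<lambda>x. norm (w' x))) \<le> B * (M * (b - a))"
    using wb by (intro mult_left_mono) simp_all
  then show ?thesis
    using norm_integral_mult_le_primitive_bound[OF ab ch dw cw' primitive] by (simp add: mult.assoc)
qed

lemma integral_sqrt_substitution:
  fixes g :: "real \<Rightarrow> 'a::euclidean_space"
  assumes R: "0 \<le> R" and cg: "continuous_on {0..R} g" and vanish: "\<And>r. R < r \<Longrightarrow> g r = 0"
  shows "integral {0..} (\<lambda>s. g (sqrt s)) = integral {0..R} (\<lambda>r. (2 * r) *\<^sub>R g r)"
proof -
  have "integral {0..} (\<lambda>s. g (sqrt s))
      = integral {0..} (\<lambda>s. if s \<in> {0..R\<^sup>2} then g (sqrt s) else 0)"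
  proof (rule integral_cong)
    show "g (sqrt s) = (if s \<in> {0..R\<^sup>2} then g (sqrt s) else 0)" if "s \<in> {0..}" for s
    proof (cases "s \<le> R\<^sup>2")
      case False
      then have "R < sqrt s" using R real_less_rsqrt by force
      then show ?thesis by (simp add: vanish)
    qed (use that in auto)
  qed
  also have "\<dots> = integral ({0..R\<^sup>2} \<inter> {0..}) (\<lambda>s. g (sqrt s))"
    by (rule integral_restrict_Int)
  also have "\<dots> = integral {0..R\<^sup>2} (\<lambda>s. g (sqrt s))"
    by (simp add: Int_absorb2)
  also have "\<dots> = integral {0..R} (\<lambda>r. (2 * r) *\<^sub>R g (sqrt (r\<^sup>2)))"
  proof -
    have "((\<lambda>r. (2 * r) *\<^sub>R g (sqrt (r\<^sup>2))) has_integral integral {0\<^sup>2..R\<^sup>2} (\<lambda>s. g (sqrt s))) {0..R}"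
    proof (rule has_integral_substitution)
      show "continuous_on {0\<^sup>2..R\<^sup>2} (\<lambda>s. g (sqrt s))"
        by (rule continuous_on_compose2[OF cg]) (use R in \<open>auto intro!: continuous_intros real_le_lsqrt\<close>)
      show "((\<lambda>r. r\<^sup>2) has_real_derivative 2 * r) (at r within {0..R})" for r
        by (auto intro!: derivative_eq_intros)
    qed (use R in \<open>auto intro: power_mono\<close>)
    then show ?thesis by (simp add: integral_unique)
  qed
  also have "\<dots> = integral {0..R} (\<lambda>r. (2 * r) *\<^sub>R g r)"
    by (rule integral_cong) simp
  finally show ?thesis .
qed

lemma exp_i_times_cos:
  fixes x y :: real
  shows "exp (\<i> * complex_of_real x) * complex_of_real (cos y)
           = (exp (\<i> * complex_of_real (x + y)) + exp (\<i> * complex_of_real (x - y))) / 2"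
  by (simp add: cos_exp_eq[of "complex_of_real y", unfolded cos_of_real] algebra_simps
      flip: exp_add)

lemma powr_minus_three_halves:
  fixes t :: real
  assumes "0 < t"
  shows "t powr (-3/2) = 1 / (t * sqrt t)"
proof -
  have "t powr (3/2) = t powr (1 + 1/2)" by simp
  also have "\<dots> = t powr 1 * t powr (1/2)" by (rule powr_add)
  also have "\<dots> = t * sqrt t" using assms by (simp add: powr_half_sqrt)
  finally have "t powr (3/2) = t * sqrt t" .
  have "t powr (-3/2) = t powr (-(3/2))" by simp
  also have "\<dots> = inverse (t powr (3/2))" by (rule powr_minus)
  finally show ?thesis unfolding \<open>t powr (3/2) = t * sqrt t\<close> by (simp add: inverse_eq_divide)
qed

lemma has_vector_derivative_exp_i_square:
  fixes t :: real
  shows "((\<lambda>r. exp (\<i> * complex_of_real (t * r\<^sup>2))) has_vector_derivative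
     (complex_of_real (2 * t * r) * \<i>) * exp (\<i> * complex_of_real (t * r\<^sup>2))) (at r within S)"
proof -
  have "((\<lambda>z. exp (\<i> * (complex_of_real t * z\<^sup>2))) has_field_derivative
     (\<i> * (complex_of_real t * (2 * complex_of_real r))) * exp (\<i> * (complex_of_real t * (complex_of_real r)\<^sup>2)))
     (at (complex_of_real r))"
    by (auto intro!: derivative_eq_intros)
  from has_vector_derivative_real_field[OF this, of S] show ?thesis
    by (simp add: algebra_simps)
qed

lemma integral_exp_i_square_by_parts:
  fixes w w' :: "real \<Rightarrow> complex" and t R :: real
  assumes t: "t \<noteq> 0" and R: "0 \<le> R"
    and dw: "\<And>x. x \<in> {0..R} \<Longrightarrow> (w has_vector_derivative w' x) (at x within {0..R})"
    and cw': "continuous_on {0..R} w'"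
    and w0: "w 0 = 0" and wR: "w R = 0"
  shows "integral {0..R} (\<lambda>r. complex_of_real (2 * r) * exp (\<i> * complex_of_real (t * r\<^sup>2)) * w r)
           = \<i> / complex_of_real t * integral {0..R} (\<lambda>r. exp (\<i> * complex_of_real (t * r\<^sup>2)) * w' r)"
proof -
  define E where "E r = exp (\<i> * complex_of_real (t * r\<^sup>2))" for r
  define F where "F r = - \<i> / complex_of_real t * E r" for r
  have dF: "(F has_vector_derivative complex_of_real (2 * r) * E r) (at r within {0..R})" for r
  proof -
    have "(F has_vector_derivative - \<i> / complex_of_real t * (complex_of_real (2 * t * r) * \<i> * E r))
            (at r within {0..R})"
      unfolding F_def E_def by (intro has_vector_derivative_mult_right has_vector_derivative_exp_i_square)
    moreover have "- \<i> / complex_of_real t * (complex_of_real (2 * t * r) * \<i> * E r) = complex_of_real (2 * r) * E r"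
      using t by (simp add: field_simps)
    ultimately show ?thesis by simp
  qed
  have "integral {0..R} (\<lambda>r. complex_of_real (2 * r) * E r * w r)
          = F R * w R - F 0 * w 0 - integral {0..R} (\<lambda>r. F r * w' r)"
    by (rule integral_by_parts_interval[OF R dF dw _ cw']) (auto simp: E_def intro!: continuous_intros)
  also have "integral {0..R} (\<lambda>r. F r * w' r) = - \<i> / complex_of_real t * integral {0..R} (\<lambda>r. E r * w' r)"
    unfolding F_def mult.assoc by (rule integral_mult_right)
  finally show ?thesis unfolding E_def by (simp add: w0 wR)
qed

lemma integral_inverse_square_away_from_0:
  fixes \<alpha> \<beta> :: real
  assumes ab: "\<alpha> \<le> \<beta>" and side: "1 \<le> \<alpha> \<or> \<beta> \<le> -1"
  shows "1 / (2 * \<bar>\<beta>\<bar>) + integral {\<alpha>..\<beta>} (\<lambda>u. 1 / (2 * u\<^sup>2)) \<le> 1"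
proof -
  have "((\<lambda>u. 1 / (2 * u\<^sup>2)) has_integral (- 1 / (2 * \<beta>) - - 1 / (2 * \<alpha>))) {\<alpha>..\<beta>}"
  proof (rule fundamental_theorem_of_calculus[OF ab])
    show "((\<lambda>u. - 1 / (2 * u)) has_vector_derivative 1 / (2 * x\<^sup>2)) (at x within {\<alpha>..\<beta>})"
      if "x \<in> {\<alpha>..\<beta>}" for x
    proof -
      have "x \<noteq> 0" using that side by auto
      then show ?thesis unfolding has_real_derivative_iff_has_vector_derivative[symmetric]
        by (auto intro!: derivative_eq_intros simp: field_simps power2_eq_square)
    qed
  qed
  moreover have "\<beta> \<le> \<alpha> + \<alpha> * \<beta>"
  proof (cases "1 \<le> \<alpha>")
    case True
    then have "1 * \<beta> \<le> \<alpha> * \<beta>" using ab by (intro mult_right_mono) auto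
    then show ?thesis using True by linarith
  next
    case False
    then have "- \<alpha> * 1 \<le> - \<alpha> * - \<beta>" using side ab by (intro mult_left_mono) auto
    then show ?thesis using False side by simp
  qed
  then have "- 1 / (2 * \<beta>) - - 1 / (2 * \<alpha>) \<le> 1 / 2"
    using side ab by (auto simp: field_simps)
  moreover have "1 \<le> \<bar>\<beta>\<bar>" using side ab by auto
  then have "1 / (2 * \<bar>\<beta>\<bar>) \<le> 1 / 2" by (simp add: field_simps)
  ultimately show ?thesis by (simp add: integral_unique)
qed

lemma norm_integral_exp_i_square_away_from_0:
  fixes \<alpha> \<beta> :: real
  assumes ab: "\<alpha> \<le> \<beta>" and side: "1 \<le> \<alpha> \<or> \<beta> \<le> -1"
  shows "norm (integral {\<alpha>..\<beta>} (\<lambda>u. exp (\<i> * complex_of_real (u\<^sup>2)))) \<le> 2"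
proof -
  have nz: "u \<noteq> 0" if "u \<in> {\<alpha>..\<beta>}" for u using side that by auto
  define e where "e u = exp (\<i> * complex_of_real (u\<^sup>2))" for u
  define h where "h u = complex_of_real (2 * u) * \<i> * e u" for u
  define w where "w u = - \<i> / (2 * complex_of_real u)" for u
  define w' where "w' u = \<i> / (2 * (complex_of_real u)\<^sup>2)" for u
  have ne: "norm (e u) = 1" for u unfolding e_def by (simp add: norm_exp_i_times)
  have de: "(e has_vector_derivative h x) (at x within S)" for x S
    using has_vector_derivative_exp_i_square[of 1 x S] unfolding e_def h_def by simp
  have ch: "continuous_on {\<alpha>..\<beta>} h" unfolding h_def e_def by (intro continuous_intros)
  have dw: "(w has_vector_derivative w' x) (at x within {\<alpha>..\<beta>})" if "x \<in> {\<alpha>..\<beta>}" for x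
  proof -
    have "((\<lambda>z. - \<i> / (2 * z)) has_field_derivative w' x) (at (complex_of_real x))"
      using nz[OF that] by (auto intro!: derivative_eq_intros simp: w'_def field_simps power2_eq_square)
    from has_vector_derivative_real_field[OF this] show ?thesis unfolding w_def by simp
  qed
  have cw': "continuous_on {\<alpha>..\<beta>} w'" unfolding w'_def using nz by (intro continuous_intros) auto
  have primitive: "norm (integral {\<alpha>..r} h) \<le> 2" if "r \<in> {\<alpha>..\<beta>}" for r
  proof -
    have "(h has_integral (e r - e \<alpha>)) {\<alpha>..r}"
      using that by (intro fundamental_theorem_of_calculus de) auto
    then show ?thesis
      using norm_triangle_ineq4[of "e r" "e \<alpha>"] by (simp add: integral_unique ne)
  qed
  have "integral {\<alpha>..\<beta>} e = integral {\<alpha>..\<beta>} (\<lambda>u. h u * w u)"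
    by (rule integral_cong) (use nz in \<open>auto simp: h_def w_def field_simps\<close>)
  then have "norm (integral {\<alpha>..\<beta>} e)
      \<le> 2 * (norm (w \<beta>) + integral {\<alpha>..\<beta>} (\<lambda>u. norm (w' u)))"
    using norm_integral_mult_le_primitive_bound[OF ab ch dw cw' primitive] by simp
  also have "norm (w \<beta>) + integral {\<alpha>..\<beta>} (\<lambda>u. norm (w' u)) \<le> 1"
  proof -
    have "norm (w \<beta>) = 1 / (2 * \<bar>\<beta>\<bar>)" by (simp add: w_def norm_divide)
    moreover have "norm (w' u) = 1 / (2 * u\<^sup>2)" for u by (simp add: w'_def norm_divide norm_power)
    ultimately show ?thesis using integral_inverse_square_away_from_0[OF ab side] by simp
  qed
  finally show ?thesis unfolding e_def by simp
qed

lemma norm_integral_exp_i_square_le: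
  fixes p q :: real
  assumes pq: "p \<le> q"
  shows "norm (integral {p..q} (\<lambda>u. exp (\<i> * complex_of_real (u\<^sup>2)))) \<le> 6"
proof -
  define e where "e = (\<lambda>u::real. exp (\<i> * complex_of_real (u\<^sup>2)))"
  define c1 where "c1 = min q (max p (-1))"
  define c2 where "c2 = min q (max p 1)"
  have ordered: "p \<le> c1" "c1 \<le> c2" "c2 \<le> q" using pq unfolding c1_def c2_def by auto
  have ie: "e integrable_on {a..b}" for a b unfolding e_def
    by (intro integrable_continuous_interval continuous_intros)
  have split: "integral {p..q} e = integral {p..c1} e + integral {c1..c2} e + integral {c2..q} e"
    using Henstock_Kurzweil_Integration.integral_combine[OF ordered(1) _ ie, of q]
      Henstock_Kurzweil_Integration.integral_combine[OF ordered(2) ordered(3) ie]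
      ordered by (metis add.assoc order_trans)
  have n1: "norm (integral {p..c1} e) \<le> 2"
  proof (cases "p = c1")
    case True then show ?thesis by simp
  next
    case False
    then have "c1 \<le> -1" unfolding c1_def using pq by (auto simp: min_def max_def split: if_splits)
    then show ?thesis unfolding e_def by (intro norm_integral_exp_i_square_away_from_0 ordered(1)) auto
  qed
  have n3: "norm (integral {c2..q} e) \<le> 2"
  proof (cases "c2 = q")
    case True then show ?thesis by simp
  next
    case False
    then have "1 \<le> c2" unfolding c2_def using pq by (auto simp: min_def max_def split: if_splits)
    then show ?thesis unfolding e_def by (intro norm_integral_exp_i_square_away_from_0 ordered(3)) auto
  qed
  have "norm (integral {c1..c2} e) \<le> 1 * (c2 - c1)"
    by (rule integral_bound[OF ordered(2)]) (auto simp: e_def norm_exp_i_times intro!: continuous_intros)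
  also have "\<dots> \<le> 2" unfolding c1_def c2_def by auto
  finally have n2: "norm (integral {c1..c2} e) \<le> 2" .
  have "norm (integral {p..q} e) \<le> norm (integral {p..c1} e) + norm (integral {c1..c2} e) + norm (integral {c2..q} e)"
    unfolding split by (meson norm_triangle_ineq add_mono order_trans order_refl)
  with n1 n2 n3 show ?thesis unfolding e_def by linarith
qed

lemma norm_integral_exp_i_quadratic_le:
  fixes t c r :: real
  assumes t: "0 < t" and r: "0 \<le> r"
  shows "norm (integral {0..r} (\<lambda>v. exp (\<i> * complex_of_real (t * v\<^sup>2 + c * v)))) \<le> 6 / sqrt t"
proof -
  define e where "e = (\<lambda>u::real. exp (\<i> * complex_of_real (u\<^sup>2)))"
  define h where "h = (\<lambda>v::real. exp (\<i> * complex_of_real (t * v\<^sup>2 + c * v)))"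
  define g where "g = (\<lambda>v::real. sqrt t * (v + c / (2 * t)))"
  define K where "K = complex_of_real (sqrt t) * exp (\<i> * complex_of_real (c\<^sup>2 / (4 * t)))"
  have st: "0 < sqrt t" "sqrt t * sqrt t = t" using t by auto
  have mono: "g x \<le> g y" if "x \<le> y" for x y unfolding g_def using st that by (simp add: mult_left_mono)
  have sub: "((\<lambda>v. sqrt t *\<^sub>R e (g v)) has_integral integral {g 0..g r} e) {0..r}"
  proof (rule has_integral_substitution[where c = "g 0" and d = "g r"])
    show "0 \<le> r" by (rule r)
    show "g 0 \<le> g r" by (rule mono[OF r])
    show "g ` {0..r} \<subseteq> {g 0..g r}" using mono by auto
    show "continuous_on {g 0..g r} e" unfolding e_def by (intro continuous_intros)
    show "(g has_real_derivative sqrt t) (at x within {0..r})" for x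
      unfolding g_def by (auto intro!: derivative_eq_intros)
  qed
  have eq: "sqrt t *\<^sub>R e (g v) = K * h v" for v
  proof -
    have "(g v)\<^sup>2 = t * v\<^sup>2 + c * v + c\<^sup>2 / (4 * t)"
      unfolding g_def power2_eq_square using st t by (simp add: field_simps)
    then show ?thesis unfolding e_def K_def h_def
      by (simp add: scaleR_conv_of_real algebra_simps flip: exp_add)
  qed
  have "integral {0..r} (\<lambda>v. K * h v) = integral {g 0..g r} e"
    using sub unfolding eq by (rule integral_unique)
  then have "K * integral {0..r} h = integral {g 0..g r} e" by simp
  moreover have "norm K = sqrt t" unfolding K_def using st by (simp add: norm_mult norm_exp_i_times)
  ultimately have "sqrt t * norm (integral {0..r} h) \<le> 6"
    using norm_integral_exp_i_square_le[OF mono[OF r]] unfolding e_def by (metis norm_mult)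
  then show ?thesis unfolding h_def using st by (simp add: field_simps)
qed

lemma norm_integral_exp_i_quadratic_mult_le:
  fixes w w' :: "real \<Rightarrow> complex" and t c R M :: real
  assumes t: "0 < t" and R: "0 \<le> R"
    and dw: "\<And>x. x \<in> {0..R} \<Longrightarrow> (w has_vector_derivative w' x) (at x within {0..R})"
    and cw': "continuous_on {0..R} w'"
    and wR: "w R = 0" and M: "\<And>x. x \<in> {0..R} \<Longrightarrow> norm (w' x) \<le> M"
  shows "norm (integral {0..R} (\<lambda>r. exp (\<i> * complex_of_real (t * r\<^sup>2 + c * r)) * w r))
           \<le> 6 / sqrt t * M * R"
proof -
  have "norm (integral {0..R} (\<lambda>r. exp (\<i> * complex_of_real (t * r\<^sup>2 + c * r)) * w r))
          \<le> 6 / sqrt t * M * (R - 0)"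
  proof (rule norm_integral_mult_le_primitive_bound_vanishing[OF R _ dw cw' _ wR M])
    show "continuous_on {0..R} (\<lambda>r. exp (\<i> * complex_of_real (t * r\<^sup>2 + c * r)))"
      by (intro continuous_intros)
    show "norm (integral {0..r} (\<lambda>r. exp (\<i> * complex_of_real (t * r\<^sup>2 + c * r)))) \<le> 6 / sqrt t"
      if "r \<in> {0..R}" for r
      using that by (intro norm_integral_exp_i_quadratic_le[OF t]) simp
  qed
  then show ?thesis by simp
qed

lemma norm_integral_exp_i_quadratic_rescaled_le:
  fixes \<phi> \<phi>' :: "real \<Rightarrow> real" and t L S c M :: real
  assumes t: "0 < t" and L: "0 < L" and S: "0 \<le> S"
    and d\<phi>: "\<And>x. (\<phi> has_real_derivative \<phi>' x) (at x)"
    and c\<phi>': "continuous_on {0..S} \<phi>'"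
    and \<phi>S: "\<phi> S = 0" and M: "\<And>x. x \<in> {0..S} \<Longrightarrow> \<bar>\<phi>' x\<bar> \<le> M"
  shows "norm (integral {0..S * L} (\<lambda>r. exp (\<i> * complex_of_real (t * r\<^sup>2 + c * r))
                                         * complex_of_real (\<phi> (r / L))))
           \<le> 6 * M * S / sqrt t"
proof -
  have scaled: "r / L \<in> {0..S}" if "r \<in> {0..S * L}" for r
    using that L by (auto simp: field_simps)
  have "norm (integral {0..S * L} (\<lambda>r. exp (\<i> * complex_of_real (t * r\<^sup>2 + c * r))
                                         * complex_of_real (\<phi> (r / L))))
          \<le> 6 / sqrt t * (M / L) * (S * L)"
  proof (rule norm_integral_exp_i_quadratic_mult_le[OF t])
    show "((\<lambda>r. complex_of_real (\<phi> (r / L))) has_vector_derivative complex_of_real (\<phi>' (x / L) / L))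
            (at x within {0..S * L})" for x
    proof -
      have "((\<lambda>r. \<phi> (r / L)) has_real_derivative \<phi>' (x / L) * (1 / L)) (at x)"
        by (rule DERIV_chain2[OF d\<phi>]) (use L in \<open>auto intro!: derivative_eq_intros\<close>)
      then have "((\<lambda>r. \<phi> (r / L)) has_real_derivative \<phi>' (x / L) / L) (at x within {0..S * L})"
        by (simp add: has_field_derivative_at_within)
      from has_vector_derivative_of_real[OF this] show ?thesis .
    qed
    show "continuous_on {0..S * L} (\<lambda>r. complex_of_real (\<phi>' (r / L) / L))"
      by (intro continuous_intros continuous_on_compose2[OF c\<phi>']) (use scaled L in auto)
    show "norm (complex_of_real (\<phi>' (x / L) / L)) \<le> M / L" if "x \<in> {0..S * L}" for x
      unfolding norm_of_real using M[OF scaled[OF that]] L by (simp add: abs_div divide_right_mono)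
  qed (use S L \<phi>S in auto)
  also have "\<dots> = 6 * M * S / sqrt t"
    using L by (simp add: field_simps)
  finally show ?thesis .
qed

lemma integral_exp_i_sin_sqrt_cutoff_by_parts:
  fixes \<psi> \<psi>' :: "real \<Rightarrow> real" and t L a :: real
  assumes t: "t \<noteq> 0" and L: "0 < L"
    and d\<psi>: "\<And>x. (\<psi> has_real_derivative \<psi>' x) (at x)"
    and c\<psi>': "continuous_on UNIV \<psi>'"
    and vanish: "\<And>x. 2 < x \<Longrightarrow> \<psi> x = 0"
  shows "integral {0..} (\<lambda>s. exp (\<i> * complex_of_real (t * s))
                             * complex_of_real (sin (a * sqrt s) * \<psi> (sqrt s / L)))
           = \<i> / complex_of_real t * integral {0..3 * L} (\<lambda>r. exp (\<i> * complex_of_real (t * r\<^sup>2))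
                 * complex_of_real (a * cos (a * r) * \<psi> (r / L) + sin (a * r) * (\<psi>' (r / L) / L)))"
proof -
  define E where "E r = exp (\<i> * complex_of_real (t * r\<^sup>2))" for r
  define w where "w r = complex_of_real (sin (a * r) * \<psi> (r / L))" for r
  have c\<psi>: "continuous_on UNIV \<psi>"
    using d\<psi> by (meson DERIV_isCont continuous_at_imp_continuous_on)
  have R: "0 \<le> 3 * L" using L by simp
  have "integral {0..} (\<lambda>s. exp (\<i> * complex_of_real (t * s))
                             * complex_of_real (sin (a * sqrt s) * \<psi> (sqrt s / L)))
          = integral {0..} (\<lambda>s. E (sqrt s) * w (sqrt s))"
    by (rule integral_cong) (simp add: E_def w_def)
  also have "\<dots> = integral {0..3 * L} (\<lambda>r. (2 * r) *\<^sub>R (E r * w r))"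
  proof (rule integral_sqrt_substitution[OF R])
    show "continuous_on {0..3 * L} (\<lambda>r. E r * w r)"
      unfolding E_def w_def
      by (intro continuous_intros continuous_on_compose2[OF c\<psi>]) (use L in auto)
    show "E r * w r = 0" if "3 * L < r" for r
      using that L by (simp add: w_def vanish field_simps)
  qed
  also have "\<dots> = integral {0..3 * L} (\<lambda>r. complex_of_real (2 * r) * E r * w r)"
    by (simp add: scaleR_conv_of_real mult.assoc)
  also have "\<dots> = \<i> / complex_of_real t * integral {0..3 * L} (\<lambda>r. E r
                 * complex_of_real (a * cos (a * r) * \<psi> (r / L) + sin (a * r) * (\<psi>' (r / L) / L)))"
    unfolding E_def
  proof (rule integral_exp_i_square_by_parts[OF t R])
    show "(w has_vector_derivative
            complex_of_real (a * cos (a * x) * \<psi> (x / L) + sin (a * x) * (\<psi>' (x / L) / L)))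
            (at x within {0..3 * L})" for x
    proof -
      have "((\<lambda>r. \<psi> (r / L)) has_real_derivative \<psi>' (x / L) * (1 / L)) (at x)"
        by (rule DERIV_chain2[OF d\<psi>]) (use L in \<open>auto intro!: derivative_eq_intros\<close>)
      then have "((\<lambda>r. sin (a * r) * \<psi> (r / L)) has_real_derivative
                   a * cos (a * x) * \<psi> (x / L) + sin (a * x) * (\<psi>' (x / L) / L)) (at x)"
        by (auto intro!: derivative_eq_intros)
      then have "((\<lambda>r. sin (a * r) * \<psi> (r / L)) has_real_derivative
                   a * cos (a * x) * \<psi> (x / L) + sin (a * x) * (\<psi>' (x / L) / L)) (at x within {0..3 * L})"
        by (simp add: has_field_derivative_at_within)
      from has_vector_derivative_of_real[OF this] show ?thesis unfolding w_def .
    qed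
    show "continuous_on {0..3 * L} (\<lambda>r. complex_of_real
            (a * cos (a * r) * \<psi> (r / L) + sin (a * r) * (\<psi>' (r / L) / L)))"
      by (intro continuous_intros continuous_on_compose2[OF c\<psi>] continuous_on_compose2[OF c\<psi>'])
         (use L in auto)
    show "w (3 * L) = 0" using L by (simp add: w_def vanish)
  qed (simp add: w_def)
  finally show ?thesis unfolding E_def .
qed

lemma norm_integral_exp_i_square_sin_cutoff_le:
  fixes \<psi>' \<psi>'' :: "real \<Rightarrow> real" and t L a M1 M2 :: real
  assumes t: "0 < t" and L: "0 < L"
    and d\<psi>': "\<And>x. (\<psi>' has_real_derivative \<psi>'' x) (at x)"
    and c\<psi>'': "continuous_on {0..3} \<psi>''"
    and \<psi>'3: "\<psi>' 3 = 0"
    and M1: "\<And>x. x \<in> {0..3} \<Longrightarrow> \<bar>\<psi>' x\<bar> \<le> M1"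
    and M2: "\<And>x. x \<in> {0..3} \<Longrightarrow> \<bar>\<psi>'' x\<bar> \<le> M2"
  shows "norm (integral {0..3 * L} (\<lambda>r. exp (\<i> * complex_of_real (t * r\<^sup>2))
                                       * complex_of_real (sin (a * r) * \<psi>' (r / L) / L)))
           \<le> 18 * \<bar>a\<bar> * (M1 + 3 * M2) / sqrt t"
proof -
  define \<phi> where "\<phi> x = sin (a * L * x) * \<psi>' x / L" for x
  define \<phi>' where "\<phi>' x = a * cos (a * L * x) * \<psi>' x + sin (a * L * x) * \<psi>'' x / L" for x
  have c\<psi>': "continuous_on UNIV \<psi>'"
    using d\<psi>' by (meson DERIV_isCont continuous_at_imp_continuous_on)
  have d\<phi>: "(\<phi> has_real_derivative \<phi>' x) (at x)" for x
    unfolding \<phi>_def \<phi>'_def using L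
    by (auto intro!: derivative_eq_intros d\<psi>' simp: field_simps)
  have c\<phi>': "continuous_on {0..3} \<phi>'"
    unfolding \<phi>'_def
    by (intro continuous_intros continuous_on_subset[OF c\<psi>'] c\<psi>'') (use L in auto)
  have M: "\<bar>\<phi>' x\<bar> \<le> \<bar>a\<bar> * (M1 + 3 * M2)" if x: "x \<in> {0..3}" for x
  proof -
    have "\<bar>a\<bar> * \<bar>cos (a * L * x)\<bar> * \<bar>\<psi>' x\<bar> \<le> \<bar>a\<bar> * 1 * M1"
      by (intro mult_mono M1[OF x]) auto
    then have A: "\<bar>a * cos (a * L * x) * \<psi>' x\<bar> \<le> \<bar>a\<bar> * M1"
      by (simp add: abs_mult)
    have "\<bar>sin (a * L * x)\<bar> \<le> \<bar>a\<bar> * L * 3"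
    proof -
      have "\<bar>a\<bar> * L * x \<le> \<bar>a\<bar> * L * 3" using x L by (intro mult_left_mono) auto
      then show ?thesis using abs_sin_x_le_abs_x[of "a * L * x"] x L by (simp add: abs_mult)
    qed
    then have "\<bar>sin (a * L * x)\<bar> * \<bar>\<psi>'' x\<bar> \<le> (\<bar>a\<bar> * L * 3) * M2"
      using M2[OF x] by (intro mult_mono) auto
    then have B: "\<bar>sin (a * L * x) * \<psi>'' x / L\<bar> \<le> \<bar>a\<bar> * (3 * M2)"
      using L by (simp add: abs_mult field_simps)
    have "\<bar>\<phi>' x\<bar> \<le> \<bar>a * cos (a * L * x) * \<psi>' x\<bar> + \<bar>sin (a * L * x) * \<psi>'' x / L\<bar>"
      unfolding \<phi>'_def by (rule abs_triangle_ineq)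
    then show ?thesis
      using A B by (simp add: distrib_left)
  qed
  have "norm (integral {0..3 * L} (\<lambda>r. exp (\<i> * complex_of_real (t * r\<^sup>2 + 0 * r))
                                       * complex_of_real (\<phi> (r / L))))
           \<le> 6 * (\<bar>a\<bar> * (M1 + 3 * M2)) * 3 / sqrt t"
    by (rule norm_integral_exp_i_quadratic_rescaled_le[OF t L _ d\<phi> c\<phi>' _ M])
       (simp_all add: \<phi>_def \<psi>'3)
  moreover have "\<phi> (r / L) = sin (a * r) * \<psi>' (r / L) / L" for r
    using L by (simp add: \<phi>_def)
  ultimately show ?thesis by simp
qed

lemma integral_exp_i_square_cos_split:
  fixes u k :: "real \<Rightarrow> complex" and t a R :: real
  assumes cu: "continuous_on {0..R} u" and ck: "continuous_on {0..R} k"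
  shows "integral {0..R} (\<lambda>r. exp (\<i> * complex_of_real (t * r\<^sup>2))
                              * (complex_of_real (a * cos (a * r)) * u r + k r))
           = complex_of_real a * ((integral {0..R} (\<lambda>r. exp (\<i> * complex_of_real (t * r\<^sup>2 + a * r)) * u r)
                 + integral {0..R} (\<lambda>r. exp (\<i> * complex_of_real (t * r\<^sup>2 + - a * r)) * u r)) / 2)
             + integral {0..R} (\<lambda>r. exp (\<i> * complex_of_real (t * r\<^sup>2)) * k r)"
proof -
  define h where "h c r = exp (\<i> * complex_of_real (t * r\<^sup>2 + c * r))" for c r
  have split: "exp (\<i> * complex_of_real (t * r\<^sup>2)) * (complex_of_real (a * cos (a * r)) * u r + k r)
        = complex_of_real a * ((h a r * u r + h (- a) r * u r) / 2)
          + exp (\<i> * complex_of_real (t * r\<^sup>2)) * k r" for r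
  proof -
    have "t * r\<^sup>2 + - a * r = t * r\<^sup>2 - a * r" by simp
    then have cos: "exp (\<i> * complex_of_real (t * r\<^sup>2)) * complex_of_real (cos (a * r))
                      = (h a r + h (- a) r) / 2"
      unfolding h_def by (simp only: exp_i_times_cos)
    have "exp (\<i> * complex_of_real (t * r\<^sup>2)) * (complex_of_real (a * cos (a * r)) * u r + k r)
        = complex_of_real a * (exp (\<i> * complex_of_real (t * r\<^sup>2)) * complex_of_real (cos (a * r))) * u r
          + exp (\<i> * complex_of_real (t * r\<^sup>2)) * k r"
      by (simp add: algebra_simps)
    then show ?thesis
      unfolding cos by (simp add: algebra_simps add_divide_distrib)
  qed
  have "(\<lambda>r. h c r * u r) integrable_on {0..R}"
    "(\<lambda>r. exp (\<i> * complex_of_real (t * r\<^sup>2)) * k r) integrable_on {0..R}" for c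
    unfolding h_def by (intro integrable_continuous_interval continuous_intros cu ck)+
  then show ?thesis
    unfolding split h_def[symmetric]
    by (intro integral_unique has_integral_add has_integral_mult_right has_integral_divide integrable_integral)
qed

lemma norm_integral_exp_i_square_cutoff_derivative_le:
  fixes \<psi> \<psi>' \<psi>'' :: "real \<Rightarrow> real" and t L a M1 M2 :: real
  assumes t: "0 < t" and L: "0 < L"
    and d\<psi>: "\<And>x. (\<psi> has_real_derivative \<psi>' x) (at x)"
    and d\<psi>': "\<And>x. (\<psi>' has_real_derivative \<psi>'' x) (at x)"
    and c\<psi>'': "continuous_on {0..3} \<psi>''"
    and \<psi>3: "\<psi> 3 = 0" and \<psi>'3: "\<psi>' 3 = 0"
    and M1: "\<And>x. x \<in> {0..3} \<Longrightarrow> \<bar>\<psi>' x\<bar> \<le> M1"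
    and M2: "\<And>x. x \<in> {0..3} \<Longrightarrow> \<bar>\<psi>'' x\<bar> \<le> M2"
  shows "norm (integral {0..3 * L} (\<lambda>r. exp (\<i> * complex_of_real (t * r\<^sup>2))
           * complex_of_real (a * cos (a * r) * \<psi> (r / L) + sin (a * r) * (\<psi>' (r / L) / L))))
           \<le> 18 * \<bar>a\<bar> * (2 * M1 + 3 * M2) / sqrt t"
proof -
  define A where "A c = integral {0..3 * L} (\<lambda>r. exp (\<i> * complex_of_real (t * r\<^sup>2 + c * r))
                                                  * complex_of_real (\<psi> (r / L)))" for c
  define K where "K = integral {0..3 * L} (\<lambda>r. exp (\<i> * complex_of_real (t * r\<^sup>2))
                                              * complex_of_real (sin (a * r) * \<psi>' (r / L) / L))"
  have c\<psi>: "continuous_on UNIV \<psi>" and c\<psi>': "continuous_on UNIV \<psi>'"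
    using d\<psi> d\<psi>' by (meson DERIV_isCont continuous_at_imp_continuous_on)+
  have decomposition: "integral {0..3 * L} (\<lambda>r. exp (\<i> * complex_of_real (t * r\<^sup>2))
           * complex_of_real (a * cos (a * r) * \<psi> (r / L) + sin (a * r) * (\<psi>' (r / L) / L)))
        = complex_of_real a * ((A a + A (- a)) / 2) + K"
  proof -
    have "integral {0..3 * L} (\<lambda>r. exp (\<i> * complex_of_real (t * r\<^sup>2))
           * complex_of_real (a * cos (a * r) * \<psi> (r / L) + sin (a * r) * (\<psi>' (r / L) / L)))
        = integral {0..3 * L} (\<lambda>r. exp (\<i> * complex_of_real (t * r\<^sup>2))
           * (complex_of_real (a * cos (a * r)) * complex_of_real (\<psi> (r / L))
              + complex_of_real (sin (a * r) * \<psi>' (r / L) / L)))"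
      by (rule integral_cong) simp
    also have "\<dots> = complex_of_real a * ((A a + A (- a)) / 2) + K"
      unfolding A_def K_def
      by (rule integral_exp_i_square_cos_split)
         (intro continuous_intros continuous_on_compose2[OF c\<psi>] continuous_on_compose2[OF c\<psi>'];
          use L in force)+
    finally show ?thesis .
  qed
  have bound_A: "norm (A c) \<le> 18 * M1 / sqrt t" for c
    using norm_integral_exp_i_quadratic_rescaled_le[OF t L _ d\<psi> _ \<psi>3 M1, of c]
      continuous_on_subset[OF c\<psi>'] by (simp add: A_def)
  have "norm (A a + A (- a)) \<le> 2 * (18 * M1 / sqrt t)"
    using norm_triangle_ineq[of "A a" "A (- a)"] bound_A[of a] bound_A[of "- a"] by linarith
  then have "norm (complex_of_real a * ((A a + A (- a)) / 2)) \<le> \<bar>a\<bar> * (18 * M1 / sqrt t)"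
    unfolding norm_mult norm_of_real by (intro mult_left_mono) (simp_all add: norm_divide)
  moreover have "norm K \<le> 18 * \<bar>a\<bar> * (M1 + 3 * M2) / sqrt t"
    unfolding K_def by (rule norm_integral_exp_i_square_sin_cutoff_le[OF t L d\<psi>' c\<psi>'' \<psi>'3 M1 M2])
  ultimately have "norm (complex_of_real a * ((A a + A (- a)) / 2) + K)
        \<le> \<bar>a\<bar> * (18 * M1 / sqrt t) + 18 * \<bar>a\<bar> * (M1 + 3 * M2) / sqrt t"
    using norm_triangle_ineq[of "complex_of_real a * ((A a + A (- a)) / 2)" K] by linarith
  also have "\<dots> = 18 * \<bar>a\<bar> * (2 * M1 + 3 * M2) / sqrt t"
    using t by (simp add: field_simps)
  finally show ?thesis unfolding decomposition .
qed

lemma norm_integral_exp_i_sin_sqrt_cutoff_le: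
  fixes \<psi> \<psi>' \<psi>'' :: "real \<Rightarrow> real" and t L a M1 M2 :: real
  assumes t: "0 < t" and L: "0 < L"
    and d\<psi>: "\<And>x. (\<psi> has_real_derivative \<psi>' x) (at x)"
    and d\<psi>': "\<And>x. (\<psi>' has_real_derivative \<psi>'' x) (at x)"
    and c\<psi>'': "continuous_on {0..3} \<psi>''"
    and vanish: "\<And>x. 2 < x \<Longrightarrow> \<psi> x = 0"
    and M1: "\<And>x. x \<in> {0..3} \<Longrightarrow> \<bar>\<psi>' x\<bar> \<le> M1"
    and M2: "\<And>x. x \<in> {0..3} \<Longrightarrow> \<bar>\<psi>'' x\<bar> \<le> M2"
  shows "norm (integral {0..} (\<lambda>s. exp (\<i> * complex_of_real (t * s))
                                   * complex_of_real (sin (a * sqrt s) * \<psi> (sqrt s / L))))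
           \<le> 18 * (2 * M1 + 3 * M2) * t powr (-3/2) * \<bar>a\<bar>"
proof -
  have c\<psi>': "continuous_on UNIV \<psi>'"
    using d\<psi>' by (meson DERIV_isCont continuous_at_imp_continuous_on)
  have \<psi>'3: "\<psi>' 3 = 0"
    by (rule DERIV_local_const[OF d\<psi>, of 1]) (auto simp: vanish)
  have "norm (integral {0..} (\<lambda>s. exp (\<i> * complex_of_real (t * s))
                                   * complex_of_real (sin (a * sqrt s) * \<psi> (sqrt s / L))))
          = 1 / t * norm (integral {0..3 * L} (\<lambda>r. exp (\<i> * complex_of_real (t * r\<^sup>2))
              * complex_of_real (a * cos (a * r) * \<psi> (r / L) + sin (a * r) * (\<psi>' (r / L) / L))))"
    using integral_exp_i_sin_sqrt_cutoff_by_parts[OF _ L d\<psi> c\<psi>' vanish, of t a] t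
    by (simp add: norm_mult norm_divide)
  also have "\<dots> \<le> 1 / t * (18 * \<bar>a\<bar> * (2 * M1 + 3 * M2) / sqrt t)"
    using norm_integral_exp_i_square_cutoff_derivative_le[OF t L d\<psi> d\<psi>' c\<psi>'' _ \<psi>'3 M1 M2]
      vanish[of 3] t by (intro mult_left_mono) simp_all
  also have "\<dots> = 18 * (2 * M1 + 3 * M2) * t powr (-3/2) * \<bar>a\<bar>"
    unfolding powr_minus_three_halves[OF t] by (simp add: field_simps)
  finally show ?thesis .
qed

theorem lemma2p4:
  fixes \<psi> :: "real \<Rightarrow> real"
  assumes smooth: "smooth_real \<psi>"
    and even: "\<And>x. \<psi> (- x) = \<psi> x"
    and one: "\<And>x. -1 \<le> x \<Longrightarrow> x \<le> 1 \<Longrightarrow> \<psi> x = 1"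
    and supp: "closure {x. \<psi> x \<noteq> 0} \<subseteq> {-2..2}"
  shows "\<exists>C::real. \<forall>t::real. \<forall>a::real. t \<ge> 1 \<longrightarrow>
           (\<forall>L::real. L \<ge> 1 \<longrightarrow>
              norm (integral {0..} (\<lambda>s::real. exp (\<i> * complex_of_real (t * s))
                    * complex_of_real (sin (a * sqrt s) * \<psi> (sqrt s / L))))
              \<le> C * t powr (-3/2) * \<bar>a\<bar>)"
proof -
  obtain D :: "nat \<Rightarrow> real \<Rightarrow> real" where D0: "D 0 = \<psi>"
    and dD: "\<And>n x. (D n has_real_derivative D (Suc n) x) (at x)"
    using smooth unfolding smooth_real_def by blast
  have d\<psi>: "(\<psi> has_real_derivative D 1 x) (at x)" for x
    using dD[of 0 x] D0 by simp
  have dD1: "(D 1 has_real_derivative D 2 x) (at x)" for x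
    using dD[of 1 x] by (simp add: numeral_2_eq_2)
  have cD: "continuous_on {0..3} (D n)" for n
    using dD[of n] by (meson DERIV_isCont continuous_at_imp_continuous_on)
  have "\<exists>x\<in>{0..3}. \<forall>y\<in>{0..3}. \<bar>D n y\<bar> \<le> \<bar>D n x\<bar>" for n
    by (rule continuous_attains_sup) (auto intro!: continuous_intros cD)
  then obtain x1 x2 where M1: "\<And>x. x \<in> {0..3} \<Longrightarrow> \<bar>D 1 x\<bar> \<le> \<bar>D 1 x1\<bar>"
    and M2: "\<And>x. x \<in> {0..3} \<Longrightarrow> \<bar>D 2 x\<bar> \<le> \<bar>D 2 x2\<bar>"
    by meson
  have vanish: "\<psi> x = 0" if "2 < x" for x
    using supp closure_subset[of "{x. \<psi> x \<noteq> 0}"] that by fastforce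
  show ?thesis
    by (rule exI[of _ "18 * (2 * \<bar>D 1 x1\<bar> + 3 * \<bar>D 2 x2\<bar>)"], intro allI impI)
       (intro norm_integral_exp_i_sin_sqrt_cutoff_le[OF _ _ d\<psi> dD1 cD vanish M1 M2]; simp)
qed

end
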